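(* Fix $d\ge1$, the feasible set $\mathcal{X}=\mathbb{R}^d$, starting point $x_0=\mathbf{0}$, and $0<\mu\le L$, with quadratic switching cost. The competitive ratio of every online algorithm in the limited information setting is $\Omega\big(\frac{L}{\sqrt{\mu}}\big)$ as $\mu\to0$; that is, there are constants $c>0$ and $\mu_0>0$ such that for all $0<\mu\le\mu_0$, all $L\ge\mu$ and every such online algorithm $\mathcal{A}$, $\mathrm{cr}_{\mathcal{A}}\ge c\,L/\sqrt{\mu}$.
   Context: A problem instance consists of a horizon $T\ge1$ and differentiable functions $f_1,\dots,f_T:\mathbb{R}^d\to[0,\infty)$ with $\frac{\mu}{2}\|y-x\|^2\le f_t(y)-f_t(x)-\langle\nabla f_t(x),y-x\rangle\le\frac{L}{2}\|y-x\|^2$ for all $x,y$. An online algorithm in the limited information setting chooses, at each time $t$, an action $x_t$ using only $x_0$, the known parameters, and gradients of $f_{t-1}$ (and of earlier functions) evaluated at finitely many (adaptively chosen) points; in particular $x_t$ is chosen without any information about $f_t,\dots,f_T$. The algorithm's cost is $C_{\mathcal{A}}=\sum_{t=1}^T\big(f_t(x_t)+\frac12\|x_t-x_{t-1}\|^2\big)$, $C_{\mathsf{OPT}}$ is the minimum of the same expression over all $(x_1,\dots,x_T)$ with the same $x_0$, and $\mathrm{cr}_{\mathcal{A}}=\sup C_{\mathcal{A}}/C_{\mathsf{OPT}}$ over all problem instances (including all horizons $T$). *)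

theory Defs
  imports "HOL-Analysis.Analysis"
begin

text \<open>Actions of an online algorithm: query the gradient of f_s at a point,
  or commit to the action of the current round.\<close>
datatype 'a action = Query nat 'a | Play 'a

text \<open>Transcript of all gradient queries so far: (index s, point y, answer grad f_s y).\<close>
type_synonym 'd hist = "(nat \<times> (real^'d) \<times> (real^'d)) list"

text \<open>A deterministic online algorithm is a map (round t, transcript) to the next action.
  exec A g t h h' x: in round t, starting with transcript h, the algorithm makes finitely
  many adaptive queries to gradients of f_1..f_(t-1) only, ending with transcript h', and plays x.\<close>
inductive exec ::
  "(nat \<Rightarrow> 'd::finite hist \<Rightarrow> (real^'d) action) \<Rightarrow> (nat \<Rightarrow> real^'d \<Rightarrow> real^'d)
   \<Rightarrow> nat \<Rightarrow> 'd hist \<Rightarrow> 'd hist \<Rightarrow> real^'d \<Rightarrow> bool"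
  for A g where
  play: "A t h = Play x \<Longrightarrow> exec A g t h h x"
| query: "A t h = Query s y \<Longrightarrow> 1 \<le> s \<Longrightarrow> s < t
           \<Longrightarrow> exec A g t (h @ [(s, y, g s y)]) h' x \<Longrightarrow> exec A g t h h' x"

primrec traj ::
  "(nat \<Rightarrow> 'd::finite hist \<Rightarrow> (real^'d) action) \<Rightarrow> (nat \<Rightarrow> real^'d \<Rightarrow> real^'d)
   \<Rightarrow> nat \<Rightarrow> 'd hist \<times> (real^'d)" where
  "traj A g 0 = ([], 0)"
| "traj A g (Suc t) = (THE p. exec A g (Suc t) (fst (traj A g t)) (fst p) (snd p))"

definition is_instance ::
  "real \<Rightarrow> real \<Rightarrow> nat \<Rightarrow> (nat \<Rightarrow> real^'d::finite \<Rightarrow> real) \<Rightarrow> (nat \<Rightarrow> real^'d \<Rightarrow> real^'d) \<Rightarrow> bool"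
  where
  "is_instance \<mu> L T f g \<longleftrightarrow> T \<ge> 1 \<and>
     (\<forall>t\<in>{1..T}.
        (\<forall>x. f t x \<ge> 0) \<and>
        (\<forall>x. (f t has_derivative (\<lambda>h. g t x \<bullet> h)) (at x)) \<and>
        (\<forall>x y. \<mu> / 2 * (norm (y - x))\<^sup>2 \<le> f t y - f t x - g t x \<bullet> (y - x) \<and>
               f t y - f t x - g t x \<bullet> (y - x) \<le> L / 2 * (norm (y - x))\<^sup>2))"

definition cost :: "(nat \<Rightarrow> real^'d::finite \<Rightarrow> real) \<Rightarrow> nat \<Rightarrow> (nat \<Rightarrow> real^'d) \<Rightarrow> real" where
  "cost f T X = (\<Sum>t=1..T. f t (X t) + 1/2 * (norm (X t - X (t - 1)))\<^sup>2)"

definition opt_cost :: "(nat \<Rightarrow> real^'d::finite \<Rightarrow> real) \<Rightarrow> nat \<Rightarrow> real" where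
  "opt_cost f T = Inf {cost f T X | X. X 0 = 0}"

definition alg_cost ::
  "(nat \<Rightarrow> 'd::finite hist \<Rightarrow> (real^'d) action) \<Rightarrow> (nat \<Rightarrow> real^'d \<Rightarrow> real)
   \<Rightarrow> (nat \<Rightarrow> real^'d \<Rightarrow> real^'d) \<Rightarrow> nat \<Rightarrow> real" where
  "alg_cost A f g T = cost f T (\<lambda>t. snd (traj A g t))"

definition valid_alg :: "real \<Rightarrow> real \<Rightarrow> (nat \<Rightarrow> 'd::finite hist \<Rightarrow> (real^'d) action) \<Rightarrow> bool" where
  "valid_alg \<mu> L A \<longleftrightarrow> (\<forall>T f g. is_instance \<mu> L T f g \<longrightarrow>
      (\<forall>t<T. \<exists>h' x. exec A g (Suc t) (fst (traj A g t)) h' x))"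

text \<open>Competitive ratio as a supremum in the extended reals (c/0 = \<infinity> for c > 0, 0/0 = 0).\<close>
definition competitive_ratio :: "real \<Rightarrow> real \<Rightarrow> (nat \<Rightarrow> 'd::finite hist \<Rightarrow> (real^'d) action) \<Rightarrow> ereal" where
  "competitive_ratio \<mu> L A =
     (SUP p \<in> {(T, f, g). is_instance \<mu> L T f g}.
        (case p of (T, f, g) \<Rightarrow> ereal (alg_cost A f g T) / ereal (opt_cost f T)))"

end

theory Submission
  imports Defs
begin

text \<open>Play \<open>N \<approx> 1/\<surd>\<mu>\<close> rounds of \<open>\<mu>/2 \<parallel>x\<parallel>\<^sup>2\<close> followed by one round of
  \<open>L/2 \<parallel>x - z\<parallel>\<^sup>2\<close> with \<open>z = \<plusminus>e\<close> a unit vector. The algorithm commits to \<open>x\<^sub>N\<^sub>+\<^sub>1\<close> having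
  seen only gradients of the first \<open>N\<close> functions, which do not depend on the sign of \<open>z\<close>;
  by the parallelogram law \<open>x\<^sub>N\<^sub>+\<^sub>1\<close> is at distance at least 1 from one of \<open>\<plusminus>e\<close>, and for
  that choice the algorithm pays at least \<open>L/2\<close>. The offline optimum instead walks to \<open>z\<close>
  in \<open>N\<close> steps of length \<open>1/N\<close>, paying \<open>(N+1)(\<mu>/2 + 1/(2N\<^sup>2)) \<le> 3\<surd>\<mu>\<close>.\<close>

definition quad :: "real \<Rightarrow> 'a::real_inner \<Rightarrow> 'a \<Rightarrow> real" where
  "quad a c x = a / 2 * (norm (x - c))\<^sup>2"

lemma quad_nonneg: "0 \<le> a \<Longrightarrow> 0 \<le> quad a c x"
  unfolding quad_def by simp

lemma quad_bregman_divergence: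
  "quad a c y - quad a c x - (a *\<^sub>R (x - c)) \<bullet> (y - x) = a / 2 * (norm (y - x))\<^sup>2"
proof -
  have "(a *\<^sub>R (x - c)) \<bullet> (y - x)
      = a * ((norm (y - c))\<^sup>2 - (norm (x - c))\<^sup>2 - (norm (y - x))\<^sup>2) / 2"
    using dot_norm[of "x - c" "y - x"] by simp
  then show ?thesis unfolding quad_def by (simp add: field_simps)
qed

lemma has_derivative_quad: "(quad a c has_derivative (\<lambda>h. (a *\<^sub>R (x - c)) \<bullet> h)) (at x)"
proof -
  have "((\<lambda>x. a / 2 * ((x - c) \<bullet> (x - c))) has_derivative
        (\<lambda>h. a / 2 * (h \<bullet> (x - c) + (x - c) \<bullet> h))) (at x)"
    by (auto intro!: derivative_eq_intros)
  moreover have "(\<lambda>h. a / 2 * (h \<bullet> (x - c) + (x - c) \<bullet> h)) = (\<lambda>h. (a *\<^sub>R (x - c)) \<bullet> h)"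
    by (auto simp: inner_commute algebra_simps)
  ultimately show ?thesis unfolding quad_def power2_norm_eq_inner by simp
qed

lemma parallelogram_law:
  fixes x y :: "'a::real_inner"
  shows "(norm (x - y))\<^sup>2 + (norm (x + y))\<^sup>2 = 2 * (norm x)\<^sup>2 + 2 * (norm y)\<^sup>2"
  using dot_norm[of x y] dot_norm_neg[of x y] by (simp add: field_simps)

lemma far_from_one_of_antipodes:
  fixes x e :: "'a::real_inner"
  assumes "norm e = 1"
  obtains z where "z = e \<or> z = - e" "1 \<le> (norm (x - z))\<^sup>2"
proof -
  have "(norm (x - e))\<^sup>2 + (norm (x - - e))\<^sup>2 = 2 * (norm x)\<^sup>2 + 2"
    using parallelogram_law[of x e] assms by simp
  then have "1 \<le> (norm (x - e))\<^sup>2 \<or> 1 \<le> (norm (x - - e))\<^sup>2"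
    using zero_le_power2[of "norm x"] by linarith
  then show ?thesis using that by blast
qed

lemma is_instance_quad:
  assumes "1 \<le> T" "0 \<le> \<mu>" "\<And>t. t \<in> {1..T} \<Longrightarrow> \<mu> \<le> a t \<and> a t \<le> L"
  shows "is_instance \<mu> L T (\<lambda>t. quad (a t) (c t)) (\<lambda>t x. a t *\<^sub>R (x - c t))"
  unfolding is_instance_def
proof (intro conjI ballI allI)
  fix t x y assume "t \<in> {1..T}"
  then have a: "\<mu> \<le> a t" "a t \<le> L" using assms(3) by auto
  show "0 \<le> quad (a t) (c t) x" using a assms(2) by (simp add: quad_nonneg)
  show "(quad (a t) (c t) has_derivative (\<lambda>h. (a t *\<^sub>R (x - c t)) \<bullet> h)) (at x)"
    by (rule has_derivative_quad)
  show "\<mu> / 2 * (norm (y - x))\<^sup>2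
      \<le> quad (a t) (c t) y - quad (a t) (c t) x - (a t *\<^sub>R (x - c t)) \<bullet> (y - x)"
    "quad (a t) (c t) y - quad (a t) (c t) x - (a t *\<^sub>R (x - c t)) \<bullet> (y - x)
      \<le> L / 2 * (norm (y - x))\<^sup>2"
    unfolding quad_bregman_divergence using a by (auto intro: mult_right_mono)
qed (use assms(1) in simp)

lemma exec_cong_grad:
  assumes "exec A g t h h' x" "\<And>s. s < t \<Longrightarrow> g s = g' s"
  shows "exec A g' t h h' x"
  using assms
proof (induction rule: exec.induct)
  case (play t h x)
  then show ?case by (simp add: exec.play)
next
  case (query t h s y h' x)
  then have "exec A g' t (h @ [(s, y, g' s y)]) h' x" by metis
  with query.hyps(1-3) show ?case by (blast intro: exec.query)
qed

lemma traj_cong_grad: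
  assumes "\<And>s. s < T \<Longrightarrow> g s = g' s" "t \<le> T"
  shows "traj A g t = traj A g' t"
  using assms(2)
proof (induction t)
  case (Suc t)
  have "exec A g (Suc t) h h' x \<longleftrightarrow> exec A g' (Suc t) h h' x" for h h' x
    using exec_cong_grad[of A g "Suc t" h h' x g'] exec_cong_grad[of A g' "Suc t" h h' x g]
      assms(1) Suc.prems by fastforce
  then show ?case using Suc by simp
qed simp

lemma cost_nonneg:
  assumes "\<forall>t\<in>{1..T}. \<forall>x. 0 \<le> f t x"
  shows "0 \<le> cost f T X"
  unfolding cost_def using assms by (intro sum_nonneg) auto

lemma last_round_le_cost:
  assumes "1 \<le> T" "\<forall>t\<in>{1..T}. \<forall>x. 0 \<le> f t x"
  shows "f T (X T) \<le> cost f T X"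
proof -
  have "f T (X T) \<le> f T (X T) + 1/2 * (norm (X T - X (T - 1)))\<^sup>2" by simp
  also have "\<dots> \<le> cost f T X"
    unfolding cost_def using assms by (intro member_le_sum) auto
  finally show ?thesis .
qed

lemma opt_cost_le_cost:
  assumes "\<forall>t\<in>{1..T}. \<forall>x. 0 \<le> f t x" "X 0 = 0"
  shows "opt_cost f T \<le> cost f T X"
  unfolding opt_cost_def
proof (rule cInf_lower)
  show "cost f T X \<in> {cost f T X |X. X 0 = 0}" using assms(2) by blast
  show "bdd_below {cost f T X |X. X 0 = 0}"
    using cost_nonneg[OF assms(1)] by (intro bdd_belowI[where m = 0]) blast
qed

lemma opt_cost_nonneg:
  assumes "\<forall>t\<in>{1..T}. \<forall>x. 0 \<le> f t x"
  shows "0 \<le> opt_cost f T"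
  unfolding opt_cost_def using cost_nonneg[OF assms] by (intro cInf_greatest) auto

definition hard_weight :: "real \<Rightarrow> real \<Rightarrow> nat \<Rightarrow> nat \<Rightarrow> real" where
  "hard_weight \<mu> L N t = (if t = Suc N then L else \<mu>)"

definition hard_center :: "nat \<Rightarrow> 'a::real_inner \<Rightarrow> nat \<Rightarrow> 'a" where
  "hard_center N z t = (if t = Suc N then z else 0)"

definition hard_fun :: "real \<Rightarrow> real \<Rightarrow> nat \<Rightarrow> 'a::real_inner \<Rightarrow> nat \<Rightarrow> 'a \<Rightarrow> real" where
  "hard_fun \<mu> L N z t = quad (hard_weight \<mu> L N t) (hard_center N z t)"

definition hard_grad :: "real \<Rightarrow> real \<Rightarrow> nat \<Rightarrow> 'a::real_inner \<Rightarrow> nat \<Rightarrow> 'a \<Rightarrow> 'a" where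
  "hard_grad \<mu> L N z t x = hard_weight \<mu> L N t *\<^sub>R (x - hard_center N z t)"

lemma is_instance_hard:
  fixes z :: "real^'d::finite"
  assumes "0 \<le> \<mu>" "\<mu> \<le> L"
  shows "is_instance \<mu> L (Suc N) (hard_fun \<mu> L N z) (hard_grad \<mu> L N z)"
proof -
  have "is_instance \<mu> L (Suc N) (\<lambda>t. quad (hard_weight \<mu> L N t) (hard_center N z t))
      (\<lambda>t x. hard_weight \<mu> L N t *\<^sub>R (x - hard_center N z t))"
    using assms by (intro is_instance_quad) (auto simp: hard_weight_def)
  then show ?thesis unfolding hard_fun_def[abs_def] hard_grad_def[abs_def] .
qed

lemma hard_fun_nonneg:
  fixes z :: "real^'d::finite"
  assumes "0 \<le> \<mu>" "\<mu> \<le> L"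
  shows "\<forall>t\<in>{1..Suc N}. \<forall>x. 0 \<le> hard_fun \<mu> L N z t x"
  using is_instance_hard[OF assms] unfolding is_instance_def by blast

lemma traj_hard_grad_indep:
  fixes z z' :: "real^'d::finite"
  shows "traj A (hard_grad \<mu> L N z) (Suc N) = traj A (hard_grad \<mu> L N z') (Suc N)"
  by (rule traj_cong_grad[where T = "Suc N"]) (auto simp: hard_grad_def hard_center_def)

lemma alg_cost_hard_ge:
  fixes z :: "real^'d::finite"
  assumes "0 \<le> \<mu>" "\<mu> \<le> L" "1 \<le> (norm (snd (traj A (hard_grad \<mu> L N z) (Suc N)) - z))\<^sup>2"
  shows "L / 2 \<le> alg_cost A (hard_fun \<mu> L N z) (hard_grad \<mu> L N z) (Suc N)"
proof -
  let ?x = "snd (traj A (hard_grad \<mu> L N z) (Suc N))"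
  have "L / 2 * 1 \<le> L / 2 * (norm (?x - z))\<^sup>2"
    using assms by (intro mult_left_mono) auto
  also have "\<dots> = hard_fun \<mu> L N z (Suc N) ?x"
    by (simp add: hard_fun_def hard_weight_def hard_center_def quad_def)
  also have "\<dots> \<le> alg_cost A (hard_fun \<mu> L N z) (hard_grad \<mu> L N z) (Suc N)"
    unfolding alg_cost_def using hard_fun_nonneg[OF assms(1,2)]
    by (intro last_round_le_cost[where f = "hard_fun \<mu> L N z"]) auto
  finally show ?thesis by simp
qed

lemma cost_hard_slow_path:
  fixes z :: "real^'d::finite"
  assumes "norm z = 1" "1 \<le> N" "0 \<le> \<mu>"
  defines "X \<equiv> \<lambda>t. (real (min t N) / real N) *\<^sub>R z"
  shows "cost (hard_fun \<mu> L N z) (Suc N) X \<le> (real N + 1) * (\<mu> / 2 + 1 / (2 * (real N)\<^sup>2))"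
proof -
  have round: "hard_fun \<mu> L N z t (X t) + 1/2 * (norm (X t - X (t - 1)))\<^sup>2
      \<le> \<mu> / 2 + 1 / (2 * (real N)\<^sup>2)" if t: "t \<in> {1..Suc N}" for t
  proof (cases "t = Suc N")
    case True
    then show ?thesis
      using assms(1-3) by (simp add: X_def hard_fun_def hard_weight_def hard_center_def quad_def)
  next
    case False
    then have tN: "1 \<le> t" "t \<le> N" using t by auto
    have step: "X t - X (t - 1) = (1 / real N) *\<^sub>R z"
      using tN by (simp add: X_def of_nat_diff diff_divide_distrib[symmetric] scaleR_diff_left[symmetric])
    have "(real t / real N)\<^sup>2 \<le> 1" using tN by (simp add: power_le_one)
    then have "hard_fun \<mu> L N z t (X t) \<le> \<mu> / 2"
      using False tN assms(1,3)
      by (simp add: X_def hard_fun_def hard_weight_def hard_center_def quad_def mult_left_le)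
    moreover have "(norm (X t - X (t - 1)))\<^sup>2 = 1 / (real N)\<^sup>2"
      unfolding step using assms(1) by (simp add: power_divide)
    ultimately show ?thesis by simp
  qed
  have "cost (hard_fun \<mu> L N z) (Suc N) X \<le> real (card {1..Suc N}) * (\<mu> / 2 + 1 / (2 * (real N)\<^sup>2))"
    unfolding cost_def by (rule sum_bounded_above) (use round in auto)
  then show ?thesis by (simp add: add.commute)
qed

lemma slow_path_cost_bound:
  fixes s n :: real
  assumes "0 < s" "s \<le> 1" "1 / s \<le> n" "n \<le> 1 / s + 1"
  shows "(n + 1) * (s\<^sup>2 / 2 + 1 / (2 * n\<^sup>2)) \<le> 3 * s"
proof -
  have "1 \<le> 1 / s" using assms(1,2) by simp
  then have n1: "1 \<le> n" using assms(3) by linarith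
  have "(n + 1) * (s\<^sup>2 / 2) \<le> n * s\<^sup>2" using n1 by (simp add: field_simps mult_le_cancel_right1)
  also have "\<dots> \<le> (1 / s + 1) * s\<^sup>2" using assms by (simp add: mult_right_mono)
  also have "\<dots> = s + s\<^sup>2" using assms by (simp add: power2_eq_square field_simps)
  also have "\<dots> \<le> 2 * s" using assms by (simp add: power2_eq_square mult_left_le)
  finally have "(n + 1) * (s\<^sup>2 / 2) \<le> 2 * s" .
  moreover have "(n + 1) * (1 / (2 * n\<^sup>2)) \<le> 1 / n" using n1 by (simp add: power2_eq_square field_simps)
  moreover have "1 / n \<le> s" using assms n1 by (simp add: field_simps)
  ultimately show ?thesis by (simp add: distrib_left)
qed

lemma opt_cost_hard_le:
  fixes z :: "real^'d::finite"
  assumes "norm z = 1" "0 < \<mu>" "\<mu> \<le> 1" "\<mu> \<le> L"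
  defines "N \<equiv> nat \<lceil>1 / sqrt \<mu>\<rceil>"
  shows "opt_cost (hard_fun \<mu> L N z) (Suc N) \<le> 3 * sqrt \<mu>"
proof -
  have N: "1 / sqrt \<mu> \<le> real N" "real N \<le> 1 / sqrt \<mu> + 1"
    unfolding N_def using assms(2) by (auto simp: of_nat_ceiling)
  moreover have "1 \<le> 1 / sqrt \<mu>" using assms(2,3) by simp
  ultimately have "1 \<le> N" by linarith
  let ?X = "\<lambda>t. (real (min t N) / real N) *\<^sub>R z"
  have "opt_cost (hard_fun \<mu> L N z) (Suc N) \<le> cost (hard_fun \<mu> L N z) (Suc N) ?X"
    using assms(2,4) by (intro opt_cost_le_cost hard_fun_nonneg) auto
  also have "\<dots> \<le> (real N + 1) * (\<mu> / 2 + 1 / (2 * (real N)\<^sup>2))"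
    using assms(1,2) \<open>1 \<le> N\<close> by (intro cost_hard_slow_path) auto
  also have "\<dots> = (real N + 1) * ((sqrt \<mu>)\<^sup>2 / 2 + 1 / (2 * (real N)\<^sup>2))"
    using assms(2) by simp
  also have "\<dots> \<le> 3 * sqrt \<mu>"
    using N assms(2,3) by (intro slow_path_cost_bound) auto
  finally show ?thesis .
qed

lemma ereal_divide_ge:
  assumes "0 < a" "a \<le> x" "0 \<le> y" "y \<le> b"
  shows "ereal (a / b) \<le> ereal x / ereal y"
proof (cases "y = 0")
  case False
  then have "a / b \<le> x / y" using assms by (intro frac_le) auto
  then show ?thesis using False by simp
qed (use assms in simp)

lemma competitive_ratio_ge:
  fixes A :: "nat \<Rightarrow> 'd::finite hist \<Rightarrow> (real^'d) action"
  assumes "0 < \<mu>" "\<mu> \<le> 1" "\<mu> \<le> L"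
  shows "ereal (L / (6 * sqrt \<mu>)) \<le> competitive_ratio \<mu> L A"
proof -
  define N where "N = nat \<lceil>1 / sqrt \<mu>\<rceil>"
  define e :: "real^'d" where "e = axis undefined 1"
  obtain z where z: "z = e \<or> z = - e"
    "1 \<le> (norm (snd (traj A (hard_grad \<mu> L N e) (Suc N)) - z))\<^sup>2"
    using far_from_one_of_antipodes[of e] unfolding e_def by auto
  then have "norm z = 1" by (auto simp: e_def)
  have "1 \<le> (norm (snd (traj A (hard_grad \<mu> L N z) (Suc N)) - z))\<^sup>2"
    using z(2) traj_hard_grad_indep by metis
  then have "L / 2 \<le> alg_cost A (hard_fun \<mu> L N z) (hard_grad \<mu> L N z) (Suc N)"
    using assms by (intro alg_cost_hard_ge) auto
  then have "ereal ((L / 2) / (3 * sqrt \<mu>)) \<le>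
      ereal (alg_cost A (hard_fun \<mu> L N z) (hard_grad \<mu> L N z) (Suc N)) /
      ereal (opt_cost (hard_fun \<mu> L N z) (Suc N))"
    using assms opt_cost_hard_le[OF \<open>norm z = 1\<close> assms, folded N_def]
      opt_cost_nonneg[OF hard_fun_nonneg[of \<mu> L N z]] by (intro ereal_divide_ge) auto
  then show ?thesis
    unfolding competitive_ratio_def using is_instance_hard[of \<mu> L N z] assms
    by (intro SUP_upper2[where i = "(Suc N, hard_fun \<mu> L N z, hard_grad \<mu> L N z)"]) auto
qed

theorem lemma10:
  "\<exists>c>0. \<exists>\<mu>0>0. \<forall>\<mu> L (A :: nat \<Rightarrow> 'd::finite hist \<Rightarrow> (real^'d) action).
      0 < \<mu> \<and> \<mu> \<le> \<mu>0 \<and> \<mu> \<le> L \<and> valid_alg \<mu> L A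
      \<longrightarrow> ereal (c * L / sqrt \<mu>) \<le> competitive_ratio \<mu> L A"
proof -
  have "ereal (1/6 * L / sqrt \<mu>) \<le> competitive_ratio \<mu> L A"
    if "0 < \<mu>" "\<mu> \<le> 1" "\<mu> \<le> L" for \<mu> L and A :: "nat \<Rightarrow> 'd hist \<Rightarrow> (real^'d) action"
    using competitive_ratio_ge[OF that, of A] by simp
  then show ?thesis
    by (intro exI[where x = "1/6 :: real"]) (auto intro!: exI[where x = "1 :: real"])
qed

end
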